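(* Let $\mathbb{K}$ be a field of characteristic zero, let $V$ be an $n$-dimensional $\mathbb{K}$-vector space, and let $t,s\in\mathbb{K}\setminus\{0,1\}$ be arbitrary. Then the functions $\widehat{\phi}_{n,t}$ and $\widehat{\phi}_{n,s}$ on $\mathcal{L}(V)$ are equal.
   Context: $C^2(V;V)$ is the space of antisymmetric bilinear maps $V\times V\to V$. $\mathcal{L}(V)=\{\lambda\in C^2(V;V): (V,\lambda)\text{ is a Lie algebra}\}$, i.e. $\lambda$ satisfies the Jacobi identity $\lambda(X,\lambda(Y,Z))+\lambda(Y,\lambda(Z,X))+\lambda(Z,\lambda(X,Y))=0$. For $t\in\mathbb{K}$, $\mathcal{D}(t,1,0)(V,\lambda)$ is the space of linear maps $D:V\to V$ with $tD\lambda(X,Y)=\lambda(DX,Y)$ for all $X,Y$, and $\widehat{\phi}_{n,t}:\mathcal{L}(V)\to\{0,1,\dots,n^2\}$ is given by $\widehat{\phi}_{n,t}(\lambda)=\dim\mathcal{D}(t,1,0)(V,\lambda)$. *)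

theory Defs
  imports "HOL-Analysis.Analysis" "HOL-Library.Function_Algebras"
begin

definition C2 :: "('k::field \<Rightarrow> 'v::ab_group_add \<Rightarrow> 'v) \<Rightarrow> ('v \<Rightarrow> 'v \<Rightarrow> 'v) set" where
  "C2 smult_V = {lam. (\<forall>x. Vector_Spaces.linear smult_V smult_V (\<lambda>y. lam x y))
                  \<and> (\<forall>y. Vector_Spaces.linear smult_V smult_V (\<lambda>x. lam x y))
                  \<and> (\<forall>x y. lam x y = - lam y x)}"

definition LieAlg :: "('k::field \<Rightarrow> 'v::ab_group_add \<Rightarrow> 'v) \<Rightarrow> ('v \<Rightarrow> 'v \<Rightarrow> 'v) set" where
  "LieAlg smult_V = {lam \<in> C2 smult_V.
      \<forall>X Y Z. lam X (lam Y Z) + lam Y (lam Z X) + lam Z (lam X Y) = 0}"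

definition Dt10 :: "('k::field \<Rightarrow> 'v::ab_group_add \<Rightarrow> 'v) \<Rightarrow> 'k \<Rightarrow> ('v \<Rightarrow> 'v \<Rightarrow> 'v) \<Rightarrow> ('v \<Rightarrow> 'v) set" where
  "Dt10 smult_V t lam = {D. Vector_Spaces.linear smult_V smult_V D
      \<and> (\<forall>X Y. smult_V t (D (lam X Y)) = lam (D X) Y)}"

text \<open>Pointwise scalar multiplication on maps V -> V (the vector space End(V)
  sits inside it as a subspace).\<close>
definition fun_scale :: "('k::field \<Rightarrow> 'v::ab_group_add \<Rightarrow> 'v) \<Rightarrow> 'k \<Rightarrow> ('v \<Rightarrow> 'v) \<Rightarrow> ('v \<Rightarrow> 'v)" where
  "fun_scale smult_V c f = (\<lambda>x. smult_V c (f x))"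

definition phi_hat :: "('k::field \<Rightarrow> 'v::ab_group_add \<Rightarrow> 'v) \<Rightarrow> 'k \<Rightarrow> ('v \<Rightarrow> 'v \<Rightarrow> 'v) \<Rightarrow> nat" where
  "phi_hat smult_V t lam = vector_space.dim (fun_scale smult_V) (Dt10 smult_V t lam)"

end

theory Submission
  imports Defs
begin

text \<open>
  If t is neither 0 nor 1 and t D[X,Y] = [D X, Y], then applying D to the Jacobi identity and
  comparing with the Jacobi identity for D X, Y, Z gives (t - t^2) D[X,[Y,Z]] = 0. Hence D kills
  [V,[V,V]], and [D w, Y] = 0 for every w in the derived algebra [V,V]. Fix a linear projection P
  of V onto [V,V]. Precomposing D with the shear id + (t/s - 1) P multiplies D by t/s on [V,V]
  without changing any [D X, Y], so it maps D(t,1,0) onto D(s,1,0), the inverse being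
  precomposition with id + (s/t - 1) P. Precomposition with a bijection is a linear automorphism
  of the space of all maps V -> V, so it preserves dimension.
\<close>

lemmas linear_map_simps =
  module_hom.zero[OF module_hom_iff_linear[THEN iffD2]]
  module_hom.add[OF module_hom_iff_linear[THEN iffD2]]
  module_hom.scale[OF module_hom_iff_linear[THEN iffD2]]
  module_hom.neg[OF module_hom_iff_linear[THEN iffD2]]

lemmas linear_map_eq_0_on_span = module_hom.eq_0_on_span[OF module_hom_iff_linear[THEN iffD2]]

lemma vector_space_fun_scale: "vector_space s \<Longrightarrow> vector_space (fun_scale s)"
  unfolding vector_space_def fun_scale_def by (auto simp: fun_eq_iff)

lemma (in vector_space_pair) dim_image_eq_of_inj_on_span:
  assumes f: "Vector_Spaces.linear s1 s2 f" and inj: "inj_on f (vs1.span S)"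
  shows "vs2.dim (f ` S) = vs1.dim S"
proof -
  obtain B where B: "B \<subseteq> S" "vs1.independent B" "S \<subseteq> vs1.span B" "card B = vs1.dim S"
    using vs1.basis_exists .
  have span_B: "vs1.span B = vs1.span S"
    using B(1,3) vs1.span_superset by (auto simp: vs1.span_eq)
  have "vs2.dim (f ` S) = vs2.dim (f ` vs1.span S)"
    by (metis f linear_span_image vs2.dim_span)
  also have "\<dots> = vs2.dim (f ` B)"
    by (metis f linear_span_image span_B vs2.dim_span)
  also have "\<dots> = card (f ` B)"
    using B(2) inj by (simp add: span_B f linear_independent_injective_image vs2.dim_eq_card_independent)
  also have "\<dots> = card B"
    using B(1) inj vs1.span_superset by (intro card_image inj_on_subset[OF inj]) blast
  finally show ?thesis
    using B(4) by simp
qed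

lemma dim_fun_scale_image_comp_surj:
  fixes s :: "'k::field \<Rightarrow> 'v::ab_group_add \<Rightarrow> 'v" and A :: "'v \<Rightarrow> 'v"
  assumes V: "vector_space s" and A: "surj A"
  shows "vector_space.dim (fun_scale s) ((\<lambda>D. D \<circ> A) ` S) = vector_space.dim (fun_scale s) S"
proof -
  have VF: "vector_space (fun_scale s)"
    using V by (rule vector_space_fun_scale)
  interpret vector_space_pair "fun_scale s" "fun_scale s"
    using VF by (simp add: vector_space_pair_def)
  have "Vector_Spaces.linear (fun_scale s) (fun_scale s) (\<lambda>D. D \<circ> A)"
    using VF by (simp add: Vector_Spaces.linear_iff fun_scale_def fun_eq_iff)
  moreover have "inj (\<lambda>D :: 'v \<Rightarrow> 'v. D \<circ> A)"
  proof (rule injI, rule ext)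
    fix D E :: "'v \<Rightarrow> 'v" and x assume "D \<circ> A = E \<circ> A"
    then show "D x = E x"
      using surjD[OF A, of x] by (metis comp_apply)
  qed
  ultimately show ?thesis
    by (auto intro: dim_image_eq_of_inj_on_span inj_on_subset)
qed

lemma (in vector_space) exists_projection_onto_span:
  obtains P where "Vector_Spaces.linear scale scale P"
    and "\<And>v. P v \<in> span S" and "\<And>w. w \<in> span S \<Longrightarrow> P w = w"
proof -
  interpret pair: vector_space_pair scale scale ..
  obtain B where B: "B \<subseteq> span S" "independent B" "span S \<subseteq> span B"
    using basis_exists .
  have span_B: "span B = span S"
    using B(1,3) span_mono span_span by blast
  define P where "P = pair.construct B id"
  have P: "Vector_Spaces.linear scale scale P"
    unfolding P_def using B(2) by (rule pair.linear_construct)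
  show thesis
  proof (rule that[OF P])
    show "P v \<in> span S" for v
      unfolding P_def using pair.construct_in_span[OF B(2), of id v] span_B by simp
    show "P w = w" if "w \<in> span S" for w
      using pair.linear_eq_on[OF P linear_id, of w B] that span_B
      by (simp add: P_def pair.construct_basis B(2))
  qed
qed

definition (in vector_space) shear :: "'a \<Rightarrow> ('b \<Rightarrow> 'b) \<Rightarrow> 'b \<Rightarrow> 'b" where
  "shear c P v = v + scale c (P v)"

lemma (in vector_space) linear_shear:
  "Vector_Spaces.linear scale scale P \<Longrightarrow> Vector_Spaces.linear scale scale (shear c P)"
  unfolding Vector_Spaces.linear_iff shear_def
  by (simp add: vector_space_axioms linear_map_simps scale_right_distrib scale_left_commute)

lemma (in vector_space) shear_comp_shear:
  assumes P: "Vector_Spaces.linear scale scale P" and idem: "\<And>v. P (P v) = P v"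
    and cd: "(1 + c) * (1 + d) = 1"
  shows "shear d P \<circ> shear c P = id"
proof
  fix v
  have "shear d P (shear c P v) = v + scale (c + d + d * c) (P v)"
    by (simp add: shear_def linear_map_simps[OF P] idem scale_right_distrib scale_left_distrib)
  also have "c + d + d * c = 0"
    using cd by (simp add: algebra_simps)
  finally show "(shear d P \<circ> shear c P) v = id v"
    by simp
qed

locale lie_algebra = vector_space scale
  for scale :: "'k::field \<Rightarrow> 'v::ab_group_add \<Rightarrow> 'v" +
  fixes bracket :: "'v \<Rightarrow> 'v \<Rightarrow> 'v"
  assumes bracket_LieAlg: "bracket \<in> LieAlg scale"
begin

lemma linear_bracket_left: "Vector_Spaces.linear scale scale (\<lambda>x. bracket x y)"
  and linear_bracket_right: "Vector_Spaces.linear scale scale (bracket x)"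
  and bracket_antisym: "bracket x y = - bracket y x"
  and jacobi: "bracket x (bracket y z) + bracket y (bracket z x) + bracket z (bracket x y) = 0"
  using bracket_LieAlg unfolding LieAlg_def C2_def mem_Collect_eq by blast+

definition derived_algebra :: "'v set" where
  "derived_algebra = span {bracket x y | x y. True}"

lemma bracket_in_derived_algebra: "bracket x y \<in> derived_algebra"
  unfolding derived_algebra_def by (rule span_base) blast

context
  fixes t :: 'k and D :: "'v \<Rightarrow> 'v"
  assumes D: "D \<in> Dt10 scale t bracket"
begin

lemma Dt10_linear: "Vector_Spaces.linear scale scale D"
  and Dt10_bracket_left: "scale t (D (bracket x y)) = bracket (D x) y"
  using D unfolding Dt10_def by auto

lemma Dt10_bracket_right: "bracket x (D y) = scale t (D (bracket x y))"
proof -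
  have "bracket x (D y) = - scale t (D (bracket y x))"
    by (simp add: bracket_antisym[of x] Dt10_bracket_left)
  also have "\<dots> = scale t (D (bracket x y))"
    by (simp add: bracket_antisym[of y x] linear_map_simps[OF Dt10_linear] scale_minus_right)
  finally show ?thesis .
qed

lemma Dt10_vanishes_on_double_bracket:
  assumes "t \<noteq> 0" "t \<noteq> 1"
  shows "D (bracket x (bracket y z)) = 0"
proof -
  define a where "a = D (bracket x (bracket y z))"
  define b where "b = D (bracket y (bracket z x))"
  define c where "c = D (bracket z (bracket x y))"
  have "D (bracket x (bracket y z) + bracket y (bracket z x) + bracket z (bracket x y)) = 0"
    by (simp only: jacobi linear_map_simps(1)[OF Dt10_linear])
  then have "a + (b + c) = 0"
    by (simp only: a_def b_def c_def linear_map_simps(2)[OF Dt10_linear] add.assoc)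
  then have "b + c = - a"
    by (simp add: add_eq_0_iff)
  moreover have "scale t a + scale (t * t) (b + c) = 0"
    using jacobi[of "D x" y z]
    by (simp add: a_def b_def c_def Dt10_bracket_left[symmetric] Dt10_bracket_right
        linear_map_simps[OF linear_bracket_right] scale_right_distrib add.assoc)
  ultimately have "scale (t - t * t) a = 0"
    by (simp add: scale_left_diff_distrib scale_minus_right)
  moreover have "t - t * t \<noteq> 0"
    using assms by (simp add: right_diff_distrib[symmetric])
  ultimately show ?thesis
    by (simp add: a_def)
qed

lemma Dt10_bracket_derived_algebra:
  assumes "t \<noteq> 0" "t \<noteq> 1" "w \<in> derived_algebra"
  shows "bracket (D w) y = 0"
proof -
  have lin: "Vector_Spaces.linear scale scale (\<lambda>w. D (bracket w y))"
    using Vector_Spaces.linear_compose[OF linear_bracket_left Dt10_linear] by (simp add: comp_def)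
  have "D (bracket w y) = 0"
  proof (rule linear_map_eq_0_on_span[OF lin])
    show "w \<in> span {bracket x y | x y. True}"
      using assms(3) by (simp add: derived_algebra_def)
    show "D (bracket u y) = 0" if "u \<in> {bracket x y | x y. True}" for u
      using that Dt10_vanishes_on_double_bracket[OF assms(1,2)]
      by (auto simp: bracket_antisym[of _ y] linear_map_simps[OF Dt10_linear])
  qed
  then show ?thesis
    by (simp flip: Dt10_bracket_left)
qed

lemma Dt10_comp_shear:
  assumes "t \<noteq> 0" "t \<noteq> 1" "s \<noteq> 0"
    and P: "Vector_Spaces.linear scale scale P" "\<And>v. P v \<in> derived_algebra"
      "\<And>w. w \<in> derived_algebra \<Longrightarrow> P w = w"
  shows "D \<circ> shear (t / s - 1) P \<in> Dt10 scale s bracket"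
proof -
  have "scale s (D (shear (t / s - 1) P (bracket x y))) = bracket (D (shear (t / s - 1) P x)) y"
    for x y
  proof -
    have "shear (t / s - 1) P (bracket x y) = scale (t / s) (bracket x y)"
      by (simp add: shear_def P(3) bracket_in_derived_algebra scale_left_diff_distrib)
    then have "scale s (D (shear (t / s - 1) P (bracket x y))) = bracket (D x) y"
      using assms(3) by (simp add: linear_map_simps[OF Dt10_linear] Dt10_bracket_left)
    also have "\<dots> = bracket (D (shear (t / s - 1) P x)) y"
      using Dt10_bracket_derived_algebra[OF assms(1,2) P(2)]
      by (simp add: shear_def linear_map_simps[OF Dt10_linear] linear_map_simps[OF linear_bracket_left])
    finally show ?thesis .
  qed
  moreover have "Vector_Spaces.linear scale scale (D \<circ> shear (t / s - 1) P)"
    using Vector_Spaces.linear_compose[OF linear_shear[OF P(1)] Dt10_linear] .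
  ultimately show ?thesis
    unfolding Dt10_def by simp
qed

end

lemma Dt10_eq_image_comp:
  assumes t: "t \<noteq> 0" "t \<noteq> 1" and s: "s \<noteq> 0" "s \<noteq> 1"
  obtains A where "surj A" and "Dt10 scale s bracket = (\<lambda>D. D \<circ> A) ` Dt10 scale t bracket"
proof -
  obtain P where P: "Vector_Spaces.linear scale scale P" "\<And>v. P v \<in> derived_algebra"
    "\<And>w. w \<in> derived_algebra \<Longrightarrow> P w = w"
    using exists_projection_onto_span[of "{bracket x y | x y. True}"]
    unfolding derived_algebra_def by blast
  have idem: "P (P v) = P v" for v
    using P(2,3) by blast
  have shear_inverse: "shear (t / s - 1) P \<circ> shear (s / t - 1) P = id"
    "shear (s / t - 1) P \<circ> shear (t / s - 1) P = id"
    using t(1) s(1) by (auto intro!: shear_comp_shear[OF P(1) idem] simp: field_simps)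
  have "Dt10 scale s bracket = (\<lambda>D. D \<circ> shear (t / s - 1) P) ` Dt10 scale t bracket"
  proof
    show "(\<lambda>D. D \<circ> shear (t / s - 1) P) ` Dt10 scale t bracket \<subseteq> Dt10 scale s bracket"
      using Dt10_comp_shear[OF _ t s(1) P] by blast
    show "Dt10 scale s bracket \<subseteq> (\<lambda>D. D \<circ> shear (t / s - 1) P) ` Dt10 scale t bracket"
    proof
      fix E assume "E \<in> Dt10 scale s bracket"
      then have "E \<circ> shear (s / t - 1) P \<in> Dt10 scale t bracket"
        using Dt10_comp_shear[OF _ s t(1) P] by blast
      moreover have "E = E \<circ> shear (s / t - 1) P \<circ> shear (t / s - 1) P"
        by (simp add: comp_assoc shear_inverse(2))
      ultimately show "E \<in> (\<lambda>D. D \<circ> shear (t / s - 1) P) ` Dt10 scale t bracket"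
        by blast
    qed
  qed
  moreover have "surj (shear (t / s - 1) P)"
    using shear_inverse(1) by (metis comp_apply id_apply surjI)
  ultimately show thesis
    using that by blast
qed

end

theorem theorem3p7:
  fixes smult_V :: "'k::field_char_0 \<Rightarrow> 'v::ab_group_add \<Rightarrow> 'v"
    and Basis :: "'v set" and n :: nat and t s :: 'k
  assumes "finite_dimensional_vector_space smult_V Basis"
    and "vector_space.dim smult_V (UNIV :: 'v set) = n"
    and "t \<noteq> 0" and "t \<noteq> 1" and "s \<noteq> 0" and "s \<noteq> 1"
  shows "\<forall>lam \<in> LieAlg smult_V. phi_hat smult_V t lam = phi_hat smult_V s lam"
proof
  fix lam assume lam: "lam \<in> LieAlg smult_V"
  have V: "vector_space smult_V"
    using assms(1) by (rule finite_dimensional_vector_space.axioms(1))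
  interpret lie_algebra smult_V lam
    using V lam by (rule lie_algebra.intro[OF _ lie_algebra_axioms.intro])
  obtain A where "surj A" and image: "Dt10 smult_V s lam = (\<lambda>D. D \<circ> A) ` Dt10 smult_V t lam"
    using Dt10_eq_image_comp[OF assms(3-6)] .
  show "phi_hat smult_V t lam = phi_hat smult_V s lam"
    unfolding phi_hat_def image dim_fun_scale_image_comp_surj[OF V \<open>surj A\<close>] ..
qed

end
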